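(* Let $(S,\mathit{Act},P,\mu)$ be an MDP with a bounded measurable reward $r$ (specified below), let $\pi$ be any stationary policy, and let $\gamma\in(0,1)$. Let $I\subseteq S$ be measurable and let $A,B\subseteq S$ be measurable. Write $U:=B\cup \mathrm{Abs}_\pi\big((A\cup B)^c\big)$ (assumed measurable). Assume: 1. (Invariant) $I$ is absorbing under $\pi$ and $\mu(I)=1$. 2. (Almost-sure reachability) For all $s\in I$, $\Pr_\pi(\tau_U<\infty\mid S_0=s)=1$. 3. (Uniform bound on hitting time) There is a constant $\bar H<\infty$ such that for all $s\in (A\setminus B)\cap I$, $\mathbb{E}_\pi[\tau_U\mid S_0=s]\le \bar H$. 4. (Reward) $r(s,a,s')=\mathbf 1_{\{s\in U\}}$ for all $s,a,s'$. Then the function $W:I\to\mathbb{R}$, $W(s):=C-V^\pi(s)$ with $C:=\frac{1}{1-\gamma}$, is a Streett supermartingale for $(A,B)$ under $\pi$ with supporting invariant $I$.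
   Context: State space $S$ and action space $\mathit{Act}$ are each finite or countable (discrete $\sigma$-algebra) or Borel subsets of a Euclidean space (Borel $\sigma$-algebra). An MDP $(S,\mathit{Act},P,\mu)$ consists of a stochastic kernel $P(\cdot\mid s,a)$ on $S$ given $S\times\mathit{Act}$ and an initial distribution $\mu$ on $S$. A stationary policy $\pi$ is a stochastic kernel $\pi(\cdot\mid s)$ on $\mathit{Act}$ given $S$. For $s\in S$, $\Pr_\pi(\cdot\mid S_0=s)$ and $\mathbb{E}_\pi[\cdot\mid S_0=s]$ denote probability and expectation for the process $(S_t,A_t)_{t\ge0}$ with $S_0=s$, $A_t\sim\pi(\cdot\mid S_t)$, $S_{t+1}\sim P(\cdot\mid S_t,A_t)$. Given a measurable reward $r:S\times\mathit{Act}\times S\to\mathbb{R}$ and $\gamma\in(0,1)$, the value function is $V^\pi(s)=\mathbb{E}_\pi\big[\sum_{t\ge0}\gamma^t r(S_t,A_t,S_{t+1})\mid S_0=s\big]$. A measurable set $X\subseteq S$ is absorbing under $\pi$ if $\Pr_\pi(S_1\in X\mid S_0=s)=1$ for all $s\in X$. For measurable $X$, $\mathrm{Abs}_\pi(X):=\{s\in S:\Pr_\pi(\forall t\ge0:\ S_t\in X\mid S_0=s)=1\}$ (largest absorbing subset). The first hitting time of a measurable $U$ is $\tau_U:=\inf\{t\ge0:S_t\in U\}$ (with $\inf\emptyset=\infty$). Streett supermartingale: given measurable $A,B,I\subseteq S$, a function $W:I\to[0,\infty)$ is a Streett supermartingale for $(A,B)$ under $\pi$ with supporting invariant $I$ if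 (i) $\mu(I)=1$; (ii) $\Pr_\pi(S_1\in I\mid S_0=s)=1$ for all $s\in I$; (iii) there is a constant $\varepsilon>0$ with $\mathbb{E}_\pi[W(S_1)\mid S_0=s]\le W(s)-\varepsilon$ for all $s\in (A\setminus B)\cap I$; (iv) $\mathbb{E}_\pi[W(S_1)\mid S_0=s]\le W(s)$ for all $s\in I\setminus(A\cup B)$. *)

theory Defs
  imports "HOL-Probability.Probability"
begin

text \<open>State space S and action space Act are Borel subsets of Euclidean spaces, carrying the
  restricted Borel sigma-algebra (this also covers the countable/discrete case up to isomorphism).\<close>

definition sspace :: "'s::euclidean_space set \<Rightarrow> 's measure" where
  "sspace S = restrict_space borel S"

definition path_space :: "'s::euclidean_space set \<Rightarrow> 'c::euclidean_space set \<Rightarrow> ('s \<times> 'c) stream measure" where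
  "path_space S Act = stream_space (sspace S \<Otimes>\<^sub>M sspace Act)"

definition St :: "nat \<Rightarrow> ('s \<times> 'c) stream \<Rightarrow> 's" where
  "St t \<omega> = fst (\<omega> !! t)"

definition At :: "nat \<Rightarrow> ('s \<times> 'c) stream \<Rightarrow> 'c" where
  "At t \<omega> = snd (\<omega> !! t)"

text \<open>T s is the law of the process (S_t,A_t) started at S_0 = s, with A_t drawn from pi(.|S_t)
  and S_(t+1) drawn from P(.|S_t,A_t). It is characterised (uniquely, by Ionescu-Tulcea) as the
  measurable kernel satisfying the one-step unfolding equation below.\<close>

definition is_traj_kernel ::
  "'s::euclidean_space set \<Rightarrow> 'c::euclidean_space set \<Rightarrow> ('s \<times> 'c \<Rightarrow> 's measure)
    \<Rightarrow> ('s \<Rightarrow> 'c measure) \<Rightarrow> ('s \<Rightarrow> ('s \<times> 'c) stream measure) \<Rightarrow> bool" where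
  "is_traj_kernel S Act P \<pi> T \<longleftrightarrow>
     T \<in> sspace S \<rightarrow>\<^sub>M prob_algebra (path_space S Act) \<and>
     (\<forall>s\<in>S. T s = \<pi> s \<bind> (\<lambda>a. P (s, a) \<bind>
                     (\<lambda>s'. distr (T s') (path_space S Act) (\<lambda>\<omega>. (s, a) ## \<omega>))))"

definition Prob :: "('s \<Rightarrow> ('s \<times> 'c) stream measure) \<Rightarrow> 's \<Rightarrow> (('s \<times> 'c) stream \<Rightarrow> bool) \<Rightarrow> real" where
  "Prob T s E = measure (T s) {\<omega> \<in> space (T s). E \<omega>}"

definition value_fun :: "('s \<Rightarrow> ('s \<times> 'c) stream measure) \<Rightarrow> real \<Rightarrow> ('s \<Rightarrow> 'c \<Rightarrow> 's \<Rightarrow> real) \<Rightarrow> 's \<Rightarrow> real" where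
  "value_fun T \<gamma> r s = (\<integral>\<omega>. (\<Sum>t. \<gamma> ^ t * r (St t \<omega>) (At t \<omega>) (St (Suc t) \<omega>)) \<partial>T s)"

definition absorbing :: "('s \<Rightarrow> ('s \<times> 'c) stream measure) \<Rightarrow> 's set \<Rightarrow> bool" where
  "absorbing T X \<longleftrightarrow> (\<forall>s\<in>X. Prob T s (\<lambda>\<omega>. St 1 \<omega> \<in> X) = 1)"

definition Abs :: "'s set \<Rightarrow> ('s \<Rightarrow> ('s \<times> 'c) stream measure) \<Rightarrow> 's set \<Rightarrow> 's set" where
  "Abs S T X = {s \<in> S. Prob T s (\<lambda>\<omega>. \<forall>t. St t \<omega> \<in> X) = 1}"

definition hit_time :: "'s set \<Rightarrow> ('s \<times> 'c) stream \<Rightarrow> enat" where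
  "hit_time U \<omega> = (if \<exists>t. St t \<omega> \<in> U then enat (LEAST t. St t \<omega> \<in> U) else \<infinity>)"

text \<open>Streett supermartingale W : I -> [0,oo) for (A,B) under pi with supporting invariant I.
  Expectations of the nonnegative quantity W(S_1) are taken as nonnegative integrals;
  condition (iii) E[W(S_1)] <= W(s) - eps is written as E[W(S_1)] + eps <= W(s).\<close>
definition streett_supermartingale ::
  "'s measure \<Rightarrow> ('s \<Rightarrow> ('s \<times> 'c) stream measure) \<Rightarrow> 's set \<Rightarrow> 's set \<Rightarrow> 's set \<Rightarrow> ('s \<Rightarrow> real) \<Rightarrow> bool" where
  "streett_supermartingale \<mu> T A B I W \<longleftrightarrow>
     (\<forall>s\<in>I. 0 \<le> W s) \<and>
     measure \<mu> I = 1 \<and>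
     (\<forall>s\<in>I. Prob T s (\<lambda>\<omega>. St 1 \<omega> \<in> I) = 1) \<and>
     (\<exists>\<epsilon>>0. \<forall>s\<in>(A - B) \<inter> I.
        (\<integral>\<^sup>+\<omega>. ennreal (W (St 1 \<omega>)) \<partial>T s) + ennreal \<epsilon> \<le> ennreal (W s)) \<and>
     (\<forall>s\<in>I - (A \<union> B). (\<integral>\<^sup>+\<omega>. ennreal (W (St 1 \<omega>)) \<partial>T s) \<le> ennreal (W s))"

end

theory Submission
  imports Defs
begin

(* With reward 1_U the function W = C - V is the expected discounted time spent outside U,
   W(s) = E[\<Sum>t. \<gamma>^t 1(S_t \<notin> U)], and it satisfies W(s) = 1(s \<notin> U) + \<gamma> E[W(S_1)].  Outside U
   this gives W(s) - E[W(S_1)] = 1 - (1 - \<gamma>) E[W(S_1)] \<ge> 0 because W \<le> C, with a uniform positive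
   margin wherever W(s) \<le> C - c for a fixed c > 0.  On (A - B) \<inter> I such a c comes from the bound
   on the hitting time: integrating \<gamma>^N \<le> \<gamma>^\<tau> + \<gamma>^N \<tau> / (N + 1) gives E[\<gamma>^\<tau>] \<ge> \<gamma>^N / 2 for
   N \<ge> 2 Hbar, and W \<le> C - E[\<gamma>^\<tau>].  A state of U outside A \<union> B lies in Abs((A \<union> B)^c), from
   which the path stays in U forever almost surely, so W and E[W(S_1)] vanish there. *)

lemma space_sspace [simp]: "space (sspace X) = X"
  by (simp add: sspace_def space_restrict_space)

lemma summable_discounted:
  fixes \<gamma> :: real and x :: "nat \<Rightarrow> real"
  assumes "0 \<le> \<gamma>" "\<gamma> < 1" "\<And>t. 0 \<le> x t" "\<And>t. x t \<le> 1"
  shows "summable (\<lambda>t. \<gamma> ^ t * x t)"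
  by (rule summable_comparison_test'[OF summable_geometric[of \<gamma>]])
    (use assms in \<open>auto intro: mult_left_le\<close>)

lemma discounted_sum_bounds:
  fixes \<gamma> :: real and x :: "nat \<Rightarrow> real"
  assumes "0 \<le> \<gamma>" "\<gamma> < 1" "\<And>t. 0 \<le> x t" "\<And>t. x t \<le> 1"
  shows "0 \<le> (\<Sum>t. \<gamma> ^ t * x t)" and "(\<Sum>t. \<gamma> ^ t * x t) \<le> 1 / (1 - \<gamma>)"
proof -
  have sum: "summable (\<lambda>t. \<gamma> ^ t * x t)" by (rule summable_discounted[OF assms])
  show "0 \<le> (\<Sum>t. \<gamma> ^ t * x t)" by (rule suminf_nonneg[OF sum]) (use assms in simp)
  have "(\<Sum>t. \<gamma> ^ t * x t) \<le> (\<Sum>t. \<gamma> ^ t)"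
    by (rule suminf_le[OF _ sum summable_geometric]) (use assms in \<open>auto intro: mult_left_le\<close>)
  also have "\<dots> = 1 / (1 - \<gamma>)" using suminf_geometric[of \<gamma>] assms by simp
  finally show "(\<Sum>t. \<gamma> ^ t * x t) \<le> 1 / (1 - \<gamma>)" .
qed

lemma discounted_sum_unfold:
  fixes \<gamma> :: real and x :: "nat \<Rightarrow> real"
  assumes "0 \<le> \<gamma>" "\<gamma> < 1" "\<And>t. 0 \<le> x t" "\<And>t. x t \<le> 1"
  shows "(\<Sum>t. \<gamma> ^ t * x t) = x 0 + \<gamma> * (\<Sum>t. \<gamma> ^ t * x (Suc t))"
proof -
  have "summable (\<lambda>t. \<gamma> ^ t * x t)" by (rule summable_discounted[OF assms])
  from suminf_split_head[OF this] have "(\<Sum>t. \<gamma> ^ t * x t) = x 0 + (\<Sum>t. \<gamma> * (\<gamma> ^ t * x (Suc t)))"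
    by (simp add: mult.assoc)
  moreover have "summable (\<lambda>t. \<gamma> ^ t * x (Suc t))" by (rule summable_discounted) (use assms in auto)
  ultimately show ?thesis
    by (simp add: suminf_mult)
qed

lemma power_le_discounted_sum:
  fixes \<gamma> :: real and x :: "nat \<Rightarrow> real"
  assumes "0 \<le> \<gamma>" "\<gamma> < 1" "\<And>t. 0 \<le> x t" "\<And>t. x t \<le> 1" "x n = 1"
  shows "\<gamma> ^ n \<le> (\<Sum>t. \<gamma> ^ t * x t)"
proof -
  have "summable (\<lambda>t. \<gamma> ^ t * x t)" by (rule summable_discounted) (use assms in auto)
  from sum_le_suminf[OF this, of "{n}"] show ?thesis using assms by simp
qed

locale mdp =
  fixes S :: "'s::euclidean_space set" and Act :: "'c::euclidean_space set"
    and P :: "'s \<times> 'c \<Rightarrow> 's measure"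
    and \<pi> :: "'s \<Rightarrow> 'c measure" and T :: "'s \<Rightarrow> ('s \<times> 'c) stream measure"
  assumes P_kernel: "P \<in> sspace S \<Otimes>\<^sub>M sspace Act \<rightarrow>\<^sub>M prob_algebra (sspace S)"
    and pi_kernel: "\<pi> \<in> sspace S \<rightarrow>\<^sub>M prob_algebra (sspace Act)"
    and traj: "is_traj_kernel S Act P \<pi> T"
begin

abbreviation "paths \<equiv> path_space S Act"

lemma T_measurable: "T \<in> sspace S \<rightarrow>\<^sub>M prob_algebra paths"
  using traj by (simp add: is_traj_kernel_def)

lemma T_subprob [measurable]: "T \<in> sspace S \<rightarrow>\<^sub>M subprob_algebra paths"
  using T_measurable by (rule measurable_prob_algebraD)

lemma P_subprob [measurable]: "P \<in> sspace S \<Otimes>\<^sub>M sspace Act \<rightarrow>\<^sub>M subprob_algebra (sspace S)"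
  using P_kernel by (rule measurable_prob_algebraD)

lemma T_unfold:
  "s \<in> S \<Longrightarrow> T s = \<pi> s \<bind> (\<lambda>a. P (s, a) \<bind> (\<lambda>s'. distr (T s') paths (\<lambda>\<omega>. (s, a) ## \<omega>)))"
  using traj by (simp add: is_traj_kernel_def)

lemma prob_space_T: "s \<in> S \<Longrightarrow> prob_space (T s)"
  using measurable_space[OF T_measurable, of s] by (simp add: space_prob_algebra)

lemma sets_T [measurable_cong]: "s \<in> S \<Longrightarrow> sets (T s) = sets paths"
  using measurable_space[OF T_measurable, of s] by (simp add: space_prob_algebra)

lemma space_T: "s \<in> S \<Longrightarrow> space (T s) = space paths"
  using sets_T by (rule sets_eq_imp_space_eq)

lemma measurable_T: "s \<in> S \<Longrightarrow> f \<in> paths \<rightarrow>\<^sub>M N \<Longrightarrow> f \<in> T s \<rightarrow>\<^sub>M N"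
  using measurable_cong_sets[OF sets_T refl] by simp

lemma sets_P [measurable_cong]: "s \<in> S \<Longrightarrow> a \<in> Act \<Longrightarrow> sets (P (s, a)) = sets (sspace S)"
  using measurable_space[OF P_kernel, of "(s, a)"] by (simp add: space_prob_algebra space_pair_measure)

lemma space_P: "s \<in> S \<Longrightarrow> a \<in> Act \<Longrightarrow> space (P (s, a)) = S"
  using sets_P[THEN sets_eq_imp_space_eq] by simp

lemma sets_pi [measurable_cong]: "s \<in> S \<Longrightarrow> sets (\<pi> s) = sets (sspace Act)"
  using measurable_space[OF pi_kernel, of s] by (simp add: space_prob_algebra)

lemma space_pi: "s \<in> S \<Longrightarrow> space (\<pi> s) = Act"
  using sets_pi[THEN sets_eq_imp_space_eq] by simp

lemma space_paths: "space paths = streams (S \<times> Act)"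
  by (simp add: path_space_def space_stream_space space_pair_measure)

lemma St_in: "\<omega> \<in> space paths \<Longrightarrow> St t \<omega> \<in> S"
  unfolding space_paths St_def using snth_in[of \<omega> "S \<times> Act" t] by auto

lemma At_in: "\<omega> \<in> space paths \<Longrightarrow> At t \<omega> \<in> Act"
  unfolding space_paths At_def using snth_in[of \<omega> "S \<times> Act" t] by auto

lemma St_measurable [measurable]: "St t \<in> paths \<rightarrow>\<^sub>M sspace S"
  unfolding St_def path_space_def by measurable

lemma St_Cons_0 [simp]: "St 0 ((s, a) ## \<omega>) = s"
  by (simp add: St_def)

lemma St_Cons_Suc [simp]: "St (Suc t) ((s, a) ## \<omega>) = St t \<omega>"
  by (simp add: St_def)

lemma St_stl: "St t (stl \<omega>) = St (Suc t) \<omega>"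
  by (simp add: St_def)

lemma stl_measurable [measurable]: "stl \<in> paths \<rightarrow>\<^sub>M paths"
  by (simp add: path_space_def)

lemma Cons_measurable: "s \<in> S \<Longrightarrow> a \<in> Act \<Longrightarrow> (\<lambda>\<omega>. (s, a) ## \<omega>) \<in> paths \<rightarrow>\<^sub>M paths"
  unfolding path_space_def
  by (rule measurable_Stream) (auto intro!: measurable_const simp: space_pair_measure)

lemma distr_Cons_T_measurable:
  assumes "s \<in> S" "a \<in> Act"
  shows "(\<lambda>s'. distr (T s') paths (\<lambda>\<omega>. (s, a) ## \<omega>)) \<in> P (s, a) \<rightarrow>\<^sub>M subprob_algebra paths"
proof -
  have "(\<lambda>(s', \<omega>). (s, a) ## \<omega>) \<in> sspace S \<Otimes>\<^sub>M paths \<rightarrow>\<^sub>M paths"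
    using Cons_measurable[OF assms] by measurable
  then show ?thesis
    using measurable_distr2[OF _ T_subprob] by (simp cong: measurable_cong_sets add: sets_P assms)
qed

lemma step_kernel_measurable:
  assumes s: "s \<in> S"
  shows "(\<lambda>a. P (s, a) \<bind> (\<lambda>s'. distr (T s') paths (\<lambda>\<omega>. (s, a) ## \<omega>)))
    \<in> \<pi> s \<rightarrow>\<^sub>M subprob_algebra paths"
proof -
  have "(\<lambda>a. P (s, a) \<bind> (\<lambda>s'. distr (T s') paths (\<lambda>\<omega>. (s, a) ## \<omega>)))
    \<in> sspace Act \<rightarrow>\<^sub>M subprob_algebra paths"
  proof (rule measurable_bind[where N = "sspace S"])
    show "(\<lambda>a. P (s, a)) \<in> sspace Act \<rightarrow>\<^sub>M subprob_algebra (sspace S)"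
      using s by (intro measurable_compose[OF _ P_subprob] measurable_Pair measurable_const
          measurable_ident_sets) auto
    have Cons_fst: "(\<lambda>(x, \<omega>). (s, fst x) ## \<omega>) \<in> (sspace Act \<Otimes>\<^sub>M sspace S) \<Otimes>\<^sub>M paths \<rightarrow>\<^sub>M paths"
      unfolding split_beta' path_space_def using s
      by (intro measurable_Stream) (auto simp: space_pair_measure intro!: measurable_Pair measurable_const)
    show "(\<lambda>x. distr (T (snd x)) paths (\<lambda>\<omega>. (s, fst x) ## \<omega>))
      \<in> sspace Act \<Otimes>\<^sub>M sspace S \<rightarrow>\<^sub>M subprob_algebra paths"
      by (rule measurable_distr2[where M = paths, OF Cons_fst]) measurable
  qed
  then show ?thesis
    by (simp cong: measurable_cong_sets add: sets_pi s)
qed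

lemma AE_T_unfold:
  assumes s: "s \<in> S" and \<Phi>: "Measurable.pred paths \<Phi>"
  shows "(AE \<omega> in T s. \<Phi> \<omega>) \<longleftrightarrow>
    (AE a in \<pi> s. AE s' in P (s, a). AE \<omega> in T s'. \<Phi> ((s, a) ## \<omega>))"
proof -
  have "(AE \<omega> in T s. \<Phi> \<omega>) \<longleftrightarrow>
    (AE a in \<pi> s. AE y in P (s, a) \<bind> (\<lambda>s'. distr (T s') paths (\<lambda>\<omega>. (s, a) ## \<omega>)). \<Phi> y)"
    unfolding T_unfold[OF s] by (rule AE_bind[OF step_kernel_measurable[OF s] \<Phi>])
  also have "\<dots> \<longleftrightarrow> (AE a in \<pi> s. AE s' in P (s, a). AE \<omega> in T s'. \<Phi> ((s, a) ## \<omega>))"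
  proof (intro AE_cong)
    fix a assume "a \<in> space (\<pi> s)"
    then have a: "a \<in> Act" using space_pi[OF s] by simp
    have "(AE y in P (s, a) \<bind> (\<lambda>s'. distr (T s') paths (\<lambda>\<omega>. (s, a) ## \<omega>)). \<Phi> y) \<longleftrightarrow>
      (AE s' in P (s, a). AE y in distr (T s') paths (\<lambda>\<omega>. (s, a) ## \<omega>). \<Phi> y)"
      by (rule AE_bind[OF distr_Cons_T_measurable[OF s a] \<Phi>])
    also have "\<dots> \<longleftrightarrow> (AE s' in P (s, a). AE \<omega> in T s'. \<Phi> ((s, a) ## \<omega>))"
    proof (intro AE_cong)
      fix s' assume "s' \<in> space (P (s, a))"
      then have "s' \<in> S" using space_P[OF s a] by simp
      then show "(AE y in distr (T s') paths (\<lambda>\<omega>. (s, a) ## \<omega>). \<Phi> y) \<longleftrightarrow>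
          (AE \<omega> in T s'. \<Phi> ((s, a) ## \<omega>))"
        using Cons_measurable[OF s a] \<Phi> by (intro AE_distr_iff) (simp_all add: measurable_T)
    qed
    finally show "(AE y in P (s, a) \<bind> (\<lambda>s'. distr (T s') paths (\<lambda>\<omega>. (s, a) ## \<omega>)). \<Phi> y) \<longleftrightarrow>
      (AE s' in P (s, a). AE \<omega> in T s'. \<Phi> ((s, a) ## \<omega>))" .
  qed
  finally show ?thesis .
qed

lemma nn_integral_T_unfold:
  assumes s: "s \<in> S" and F: "F \<in> borel_measurable paths"
  shows "(\<integral>\<^sup>+\<omega>. F \<omega> \<partial>T s) = (\<integral>\<^sup>+a. \<integral>\<^sup>+s'. \<integral>\<^sup>+\<omega>. F ((s, a) ## \<omega>) \<partial>T s' \<partial>P (s, a) \<partial>\<pi> s)"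
proof -
  have "(\<integral>\<^sup>+\<omega>. F \<omega> \<partial>T s) =
    (\<integral>\<^sup>+a. \<integral>\<^sup>+y. F y \<partial>(P (s, a) \<bind> (\<lambda>s'. distr (T s') paths (\<lambda>\<omega>. (s, a) ## \<omega>))) \<partial>\<pi> s)"
    unfolding T_unfold[OF s] by (rule nn_integral_bind[OF F step_kernel_measurable[OF s]])
  also have "\<dots> = (\<integral>\<^sup>+a. \<integral>\<^sup>+s'. \<integral>\<^sup>+\<omega>. F ((s, a) ## \<omega>) \<partial>T s' \<partial>P (s, a) \<partial>\<pi> s)"
  proof (intro nn_integral_cong)
    fix a assume "a \<in> space (\<pi> s)"
    then have a: "a \<in> Act" using space_pi[OF s] by simp
    have "(\<integral>\<^sup>+y. F y \<partial>(P (s, a) \<bind> (\<lambda>s'. distr (T s') paths (\<lambda>\<omega>. (s, a) ## \<omega>)))) =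
      (\<integral>\<^sup>+s'. \<integral>\<^sup>+y. F y \<partial>distr (T s') paths (\<lambda>\<omega>. (s, a) ## \<omega>) \<partial>P (s, a))"
      by (rule nn_integral_bind[OF F distr_Cons_T_measurable[OF s a]])
    also have "\<dots> = (\<integral>\<^sup>+s'. \<integral>\<^sup>+\<omega>. F ((s, a) ## \<omega>) \<partial>T s' \<partial>P (s, a))"
    proof (intro nn_integral_cong)
      fix s' assume "s' \<in> space (P (s, a))"
      then have "s' \<in> S" using space_P[OF s a] by simp
      then show "(\<integral>\<^sup>+y. F y \<partial>distr (T s') paths (\<lambda>\<omega>. (s, a) ## \<omega>)) = (\<integral>\<^sup>+\<omega>. F ((s, a) ## \<omega>) \<partial>T s')"
        using Cons_measurable[OF s a] F by (intro nn_integral_distr) (simp_all add: measurable_T)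
    qed
    finally show "(\<integral>\<^sup>+y. F y \<partial>(P (s, a) \<bind> (\<lambda>s'. distr (T s') paths (\<lambda>\<omega>. (s, a) ## \<omega>)))) =
      (\<integral>\<^sup>+s'. \<integral>\<^sup>+\<omega>. F ((s, a) ## \<omega>) \<partial>T s' \<partial>P (s, a))" .
  qed
  finally show ?thesis .
qed

lemma AE_St_0:
  assumes s: "s \<in> S"
  shows "AE \<omega> in T s. St 0 \<omega> = s"
proof -
  have "{s} \<in> sets (sspace S)"
    using s by (auto simp: sspace_def sets_restrict_space image_iff intro!: bexI[of _ "{s}"])
  then have "St 0 -` {s} \<inter> space paths \<in> sets paths"
    by (rule measurable_sets[OF St_measurable])
  then have "Measurable.pred paths (\<lambda>\<omega>. St 0 \<omega> = s)"
    by (simp add: pred_def vimage_def Int_def conj_commute)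
  then show ?thesis
    by (subst AE_T_unfold[OF s]) auto
qed

lemma integrable_T_bounded:
  assumes s: "s \<in> S" and f: "f \<in> borel_measurable paths" and B: "\<And>\<omega>. \<omega> \<in> space paths \<Longrightarrow> \<bar>f \<omega>\<bar> \<le> B"
  shows "integrable (T s) (f :: _ \<Rightarrow> real)"
proof -
  interpret prob_space "T s" by (rule prob_space_T[OF s])
  show ?thesis
    using B f by (intro integrable_const_bound[where B = B]) (auto simp: space_T[OF s] measurable_T[OF s])
qed

lemma nn_integral_T_stl:
  assumes s: "s \<in> S" and h: "h \<in> borel_measurable paths"
    and G: "G \<in> borel_measurable (sspace S)"
    and G_eq: "\<And>s'. s' \<in> S \<Longrightarrow> G s' = (\<integral>\<^sup>+\<omega>. h \<omega> \<partial>T s')"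
  shows "(\<integral>\<^sup>+\<omega>. h (stl \<omega>) \<partial>T s) = (\<integral>\<^sup>+\<omega>. G (St 1 \<omega>) \<partial>T s)"
proof -
  have h_stl: "(\<lambda>\<omega>. h (stl \<omega>)) \<in> borel_measurable paths"
    using h by measurable
  have G_St_1: "(\<lambda>\<omega>. G (St 1 \<omega>)) \<in> borel_measurable paths"
    using G by measurable
  have "(\<integral>\<^sup>+\<omega>. h (stl \<omega>) \<partial>T s) = (\<integral>\<^sup>+a. \<integral>\<^sup>+s'. \<integral>\<^sup>+\<omega>. h \<omega> \<partial>T s' \<partial>P (s, a) \<partial>\<pi> s)"
    using nn_integral_T_unfold[OF s h_stl] by simp
  also have "\<dots> = (\<integral>\<^sup>+a. \<integral>\<^sup>+s'. \<integral>\<^sup>+\<omega>. G (St 0 \<omega>) \<partial>T s' \<partial>P (s, a) \<partial>\<pi> s)"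
  proof (rule nn_integral_cong, rule nn_integral_cong)
    fix a s' assume a: "a \<in> space (\<pi> s)" and s': "s' \<in> space (P (s, a))"
    then have s': "s' \<in> S" using space_pi[OF s] space_P[OF s] by simp
    interpret prob_space "T s'" by (rule prob_space_T[OF s'])
    have "(\<integral>\<^sup>+\<omega>. G (St 0 \<omega>) \<partial>T s') = (\<integral>\<^sup>+\<omega>. G s' \<partial>T s')"
      using AE_St_0[OF s'] by (intro nn_integral_cong_AE) auto
    then show "(\<integral>\<^sup>+\<omega>. h \<omega> \<partial>T s') = (\<integral>\<^sup>+\<omega>. G (St 0 \<omega>) \<partial>T s')"
      by (simp add: G_eq[OF s'] emeasure_space_1)
  qed
  also have "\<dots> = (\<integral>\<^sup>+\<omega>. G (St 1 \<omega>) \<partial>T s)"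
    using nn_integral_T_unfold[OF s G_St_1] by simp
  finally show ?thesis .
qed

lemma Abs_iff_AE:
  assumes [measurable]: "X \<in> sets (sspace S)" and s: "s \<in> S"
  shows "s \<in> Abs S T X \<longleftrightarrow> (AE \<omega> in T s. \<forall>t. St t \<omega> \<in> X)"
proof -
  interpret prob_space "T s" by (rule prob_space_T[OF s])
  have "{\<omega> \<in> space (T s). \<forall>t. St t \<omega> \<in> X} \<in> sets (T s)"
    unfolding sets_T[OF s] space_T[OF s] by measurable
  from prob_eq_1[OF this] show ?thesis
    unfolding Abs_def Prob_def using s by (auto simp: eventually_ae_filter)
qed

lemma Abs_subset:
  assumes X: "X \<in> sets (sspace S)"
  shows "Abs S T X \<subseteq> X"
proof
  fix s assume s_Abs: "s \<in> Abs S T X"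
  then have s: "s \<in> S" by (simp add: Abs_def)
  interpret prob_space "T s" by (rule prob_space_T[OF s])
  have "AE \<omega> in T s. St 0 \<omega> \<in> X"
    using s_Abs Abs_iff_AE[OF X s] by auto
  with AE_St_0[OF s] have "AE \<omega> in T s. s \<in> X"
    by eventually_elim simp
  then show "s \<in> X" by simp
qed

lemma AE_St_in_Abs:
  assumes X [measurable]: "X \<in> sets (sspace S)" and [measurable]: "Abs S T X \<in> sets (sspace S)"
  shows "s \<in> Abs S T X \<Longrightarrow> AE \<omega> in T s. St t \<omega> \<in> Abs S T X"
proof (induction t arbitrary: s)
  case 0
  then have "s \<in> S" by (simp add: Abs_def)
  with AE_St_0 have "AE \<omega> in T s. St 0 \<omega> = s" by blast
  then show ?case by eventually_elim (use 0 in simp)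
next
  case (Suc t)
  then have s: "s \<in> S" by (simp add: Abs_def)
  have "AE \<omega> in T s. \<forall>t. St t \<omega> \<in> X"
    using Abs_iff_AE[OF X s] Suc.prems by simp
  then have "AE a in \<pi> s. AE s' in P (s, a). AE \<omega> in T s'. \<forall>t. St t ((s, a) ## \<omega>) \<in> X"
    by (simp add: AE_T_unfold[OF s])
  moreover have "AE a in \<pi> s. AE s' in P (s, a).
    (AE \<omega> in T s'. \<forall>t. St t ((s, a) ## \<omega>) \<in> X) \<longrightarrow>
    (AE \<omega> in T s'. St (Suc t) ((s, a) ## \<omega>) \<in> Abs S T X)"
  proof (rule AE_I2, rule AE_I2, rule impI)
    fix a s' assume "a \<in> space (\<pi> s)" "s' \<in> space (P (s, a))"
      and X_forever: "AE \<omega> in T s'. \<forall>t. St t ((s, a) ## \<omega>) \<in> X"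
    then have s': "s' \<in> S" using space_pi[OF s] space_P[OF s] by simp
    from X_forever have "AE \<omega> in T s'. \<forall>t. St t \<omega> \<in> X"
      by eventually_elim (metis St_Cons_Suc)
    then have "s' \<in> Abs S T X" using Abs_iff_AE[OF X s'] by simp
    then show "AE \<omega> in T s'. St (Suc t) ((s, a) ## \<omega>) \<in> Abs S T X"
      using Suc.IH by simp
  qed
  ultimately have "AE a in \<pi> s. AE s' in P (s, a). AE \<omega> in T s'. St (Suc t) ((s, a) ## \<omega>) \<in> Abs S T X"
    by (auto elim!: AE_mp)
  then show ?case
    by (simp add: AE_T_unfold[OF s])
qed

end

locale discounted_target = mdp S Act P \<pi> T
  for S :: "'s::euclidean_space set" and Act :: "'c::euclidean_space set"
    and P :: "'s \<times> 'c \<Rightarrow> 's measure"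
    and \<pi> :: "'s \<Rightarrow> 'c measure" and T :: "'s \<Rightarrow> ('s \<times> 'c) stream measure" +
  fixes \<gamma> :: real and U :: "'s set"
  assumes gamma_pos: "0 < \<gamma>" and gamma_less_1: "\<gamma> < 1"
    and U_sets [measurable]: "U \<in> sets (sspace S)"
begin

abbreviation C :: real where "C \<equiv> 1 / (1 - \<gamma>)"

lemma C_unfold: "C = 1 + \<gamma> * C"
  using gamma_pos gamma_less_1 by (simp add: field_simps)

definition disc_visits :: "('s \<times> 'c) stream \<Rightarrow> real" where
  "disc_visits \<omega> = (\<Sum>t. \<gamma> ^ t * indicator U (St t \<omega>))"

definition W :: "'s \<Rightarrow> real" where
  "W s = (\<integral>\<omega>. C - disc_visits \<omega> \<partial>T s)"

lemma disc_visits_bounds: "0 \<le> disc_visits \<omega>" "disc_visits \<omega> \<le> C"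
  unfolding disc_visits_def
  using gamma_pos gamma_less_1 by (intro discounted_sum_bounds; simp add: indicator_def)+

lemma disc_visits_measurable [measurable]: "disc_visits \<in> borel_measurable paths"
  unfolding disc_visits_def by measurable

lemma disc_visits_unfold: "disc_visits \<omega> = indicator U (St 0 \<omega>) + \<gamma> * disc_visits (stl \<omega>)"
  unfolding disc_visits_def St_stl
  using gamma_pos gamma_less_1 by (intro discounted_sum_unfold) (simp_all add: indicator_def)

lemma integrable_C_minus_disc_visits: "s \<in> S \<Longrightarrow> integrable (T s) (\<lambda>\<omega>. C - disc_visits \<omega>)"
  using disc_visits_bounds by (intro integrable_T_bounded[where B = C]) auto

lemma W_bounds:
  assumes s: "s \<in> S"
  shows "0 \<le> W s" and "W s \<le> C"
proof -
  interpret prob_space "T s" by (rule prob_space_T[OF s])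
  show "0 \<le> W s"
    unfolding W_def using disc_visits_bounds by (intro integral_nonneg_AE) auto
  have "W s \<le> (\<integral>\<omega>. C \<partial>T s)"
    unfolding W_def using disc_visits_bounds
    by (intro integral_mono[OF integrable_C_minus_disc_visits[OF s]]) auto
  then show "W s \<le> C" by (simp add: prob_space)
qed

lemma W_measurable [measurable]: "W \<in> borel_measurable (sspace S)"
proof -
  have "(\<lambda>N. \<integral>\<omega>. C - disc_visits \<omega> \<partial>N) \<in> subprob_algebra paths \<rightarrow>\<^sub>M borel"
    by (rule integral_measurable_subprob_algebra) measurable
  from measurable_compose[OF T_subprob this] show ?thesis unfolding W_def by simp
qed

lemma nn_integral_C_minus_disc_visits:
  "s \<in> S \<Longrightarrow> (\<integral>\<^sup>+\<omega>. ennreal (C - disc_visits \<omega>) \<partial>T s) = ennreal (W s)"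
  unfolding W_def using disc_visits_bounds
  by (intro nn_integral_eq_integral integrable_C_minus_disc_visits) auto

lemma integrable_W_St_1: "s \<in> S \<Longrightarrow> integrable (T s) (\<lambda>\<omega>. W (St 1 \<omega>))"
  using W_bounds St_in by (intro integrable_T_bounded[where B = C]) auto

lemma nn_integral_W_St_1:
  "s \<in> S \<Longrightarrow> (\<integral>\<^sup>+\<omega>. ennreal (W (St 1 \<omega>)) \<partial>T s) = ennreal (\<integral>\<omega>. W (St 1 \<omega>) \<partial>T s)"
  using W_bounds St_in by (intro nn_integral_eq_integral integrable_W_St_1) (auto simp: space_T)

lemma integral_W_St_1_nonneg: "s \<in> S \<Longrightarrow> 0 \<le> (\<integral>\<omega>. W (St 1 \<omega>) \<partial>T s)"
  using W_bounds St_in by (intro integral_nonneg_AE) (auto simp: space_T)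

lemma integral_C_minus_disc_visits_stl:
  assumes s: "s \<in> S"
  shows "(\<integral>\<omega>. C - disc_visits (stl \<omega>) \<partial>T s) = (\<integral>\<omega>. W (St 1 \<omega>) \<partial>T s)"
proof -
  interpret prob_space "T s" by (rule prob_space_T[OF s])
  have "ennreal (\<integral>\<omega>. C - disc_visits (stl \<omega>) \<partial>T s) = (\<integral>\<^sup>+\<omega>. ennreal (C - disc_visits (stl \<omega>)) \<partial>T s)"
    using disc_visits_bounds
    by (intro nn_integral_eq_integral[symmetric] integrable_T_bounded[OF s, where B = C]) auto
  also have "\<dots> = (\<integral>\<^sup>+\<omega>. ennreal (W (St 1 \<omega>)) \<partial>T s)"
    by (rule nn_integral_T_stl[OF s]) (simp_all add: nn_integral_C_minus_disc_visits)
  also have "\<dots> = ennreal (\<integral>\<omega>. W (St 1 \<omega>) \<partial>T s)"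
    by (rule nn_integral_W_St_1[OF s])
  finally show ?thesis
    using disc_visits_bounds integral_W_St_1_nonneg[OF s]
    by (subst (asm) ennreal_inj) (auto intro!: integral_nonneg_AE)
qed

lemma W_unfold:
  assumes s: "s \<in> S"
  shows "W s = (1 - indicator U s) + \<gamma> * (\<integral>\<omega>. W (St 1 \<omega>) \<partial>T s)"
proof -
  interpret prob_space "T s" by (rule prob_space_T[OF s])
  have integrable_head: "integrable (T s) (\<lambda>\<omega>. 1 - indicator U (St 0 \<omega>) :: real)"
    by (intro integrable_T_bounded[OF s, where B = 1]) (auto simp: indicator_def)
  have integrable_tail: "integrable (T s) (\<lambda>\<omega>. C - disc_visits (stl \<omega>))"
    using disc_visits_bounds by (intro integrable_T_bounded[OF s, where B = C]) auto
  have split: "C - disc_visits \<omega> = (1 - indicator U (St 0 \<omega>)) + \<gamma> * (C - disc_visits (stl \<omega>))" for \<omega>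
    using disc_visits_unfold[of \<omega>] C_unfold right_diff_distrib[of \<gamma> C "disc_visits (stl \<omega>)"]
    by linarith
  have "W s = (\<integral>\<omega>. (1 - indicator U (St 0 \<omega>)) + \<gamma> * (C - disc_visits (stl \<omega>)) \<partial>T s)"
    unfolding W_def by (intro Bochner_Integration.integral_cong refl split)
  also have "\<dots> = (\<integral>\<omega>. 1 - indicator U (St 0 \<omega>) \<partial>T s) + \<gamma> * (\<integral>\<omega>. C - disc_visits (stl \<omega>) \<partial>T s)"
    using integrable_head integrable_tail by simp
  also have "(\<integral>\<omega>. 1 - indicator U (St 0 \<omega>) \<partial>T s) = (\<integral>\<omega>. 1 - indicator U s \<partial>T s)"
    using AE_St_0[OF s] by (intro integral_cong_AE) (auto simp: measurable_T[OF s])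
  finally show ?thesis
    by (simp add: prob_space integral_C_minus_disc_visits_stl[OF s])
qed

lemma W_drift_outside:
  assumes s: "s \<in> S" and "s \<notin> U" and W_le: "W s \<le> C - c"
  shows "(\<integral>\<omega>. W (St 1 \<omega>) \<partial>T s) + (1 - \<gamma>) * c / \<gamma> \<le> W s"
proof -
  define q where "q = (\<integral>\<omega>. W (St 1 \<omega>) \<partial>T s)"
  have W_eq: "W s = 1 + \<gamma> * q"
    using W_unfold[OF s] \<open>s \<notin> U\<close> by (simp add: q_def)
  then have "\<gamma> * q + c \<le> \<gamma> * C"
    using W_le C_unfold by linarith
  then have "(1 - \<gamma>) * (\<gamma> * q + c) \<le> (1 - \<gamma>) * (\<gamma> * C)"
    using gamma_less_1 by (intro mult_left_mono) auto
  also have "\<dots> = \<gamma>"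
    using gamma_less_1 by simp
  finally show ?thesis
    unfolding W_eq q_def[symmetric] using gamma_pos gamma_less_1 by (simp add: field_simps)
qed

lemma W_eq_0_if_AE_in_U:
  assumes s: "s \<in> S" and "AE \<omega> in T s. \<forall>t. St t \<omega> \<in> U"
  shows "W s = 0"
proof -
  have "AE \<omega> in T s. C - disc_visits \<omega> = 0"
    using assms(2) by eventually_elim (use gamma_pos gamma_less_1 in \<open>simp add: disc_visits_def suminf_geometric\<close>)
  then show ?thesis
    unfolding W_def by (rule integral_eq_zero_AE)
qed

lemma integral_W_St_1_eq_0_if_AE_in_U:
  assumes s: "s \<in> S" and in_U: "AE \<omega> in T s. \<forall>t. St t \<omega> \<in> U"
  shows "(\<integral>\<omega>. W (St 1 \<omega>) \<partial>T s) = 0"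
proof -
  interpret prob_space "T s" by (rule prob_space_T[OF s])
  from in_U AE_St_0[OF s] have "AE \<omega> in T s. s \<in> U"
    by eventually_elim metis
  then have "s \<in> U" by simp
  then show ?thesis
    using W_unfold[OF s] W_eq_0_if_AE_in_U[OF s in_U] gamma_pos by simp
qed

definition disc_hit :: "('s \<times> 'c) stream \<Rightarrow> real" where
  "disc_hit \<omega> = (case hit_time U \<omega> of enat n \<Rightarrow> \<gamma> ^ n | \<infinity> \<Rightarrow> 0)"

lemma hit_time_measurable [measurable]: "hit_time U \<in> paths \<rightarrow>\<^sub>M count_space UNIV"
  unfolding hit_time_def by measurable

lemma disc_hit_measurable [measurable]: "disc_hit \<in> borel_measurable paths"
  unfolding disc_hit_def by measurable

lemma disc_hit_bounds: "0 \<le> disc_hit \<omega>" "disc_hit \<omega> \<le> 1"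
  unfolding disc_hit_def using gamma_pos gamma_less_1
  by (auto split: enat.splits intro: power_le_one)

lemma disc_hit_le_disc_visits: "disc_hit \<omega> \<le> disc_visits \<omega>"
proof (cases "hit_time U \<omega>")
  case (enat n)
  then have "\<exists>t. St t \<omega> \<in> U" and "n = (LEAST t. St t \<omega> \<in> U)"
    unfolding hit_time_def by (auto split: if_splits)
  then have "St n \<omega> \<in> U" by (metis LeastI_ex)
  then have "\<gamma> ^ n \<le> disc_visits \<omega>"
    unfolding disc_visits_def using gamma_pos gamma_less_1
    by (intro power_le_discounted_sum) (auto simp: indicator_def)
  then show ?thesis using enat by (simp add: disc_hit_def)
next
  case infinity
  then show ?thesis using disc_visits_bounds by (simp add: disc_hit_def)
qed

lemma integrable_disc_hit: "s \<in> S \<Longrightarrow> integrable (T s) disc_hit"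
  using disc_hit_bounds by (intro integrable_T_bounded[where B = 1]) auto

lemma power_le_disc_hit_plus_hit_time:
  "ennreal (\<gamma> ^ N) \<le> ennreal (disc_hit \<omega>) + ennreal (\<gamma> ^ N / (N + 1)) * ennreal_of_enat (hit_time U \<omega>)"
proof (cases "hit_time U \<omega>")
  case (enat n)
  show ?thesis
  proof (cases "n \<le> N")
    case True
    then have "\<gamma> ^ N \<le> \<gamma> ^ n"
      using gamma_pos gamma_less_1 by (intro power_decreasing) auto
    then have "ennreal (\<gamma> ^ N) \<le> ennreal (disc_hit \<omega>)"
      using enat by (simp add: disc_hit_def ennreal_leI)
    then show ?thesis by (rule order_trans) simp
  next
    case False
    then have "\<gamma> ^ N * ((real N + 1) / (real N + 1)) \<le> \<gamma> ^ N * (real n / (real N + 1))"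
      using gamma_pos by (intro mult_left_mono divide_right_mono) auto
    then have "ennreal (\<gamma> ^ N) \<le> ennreal (\<gamma> ^ N / (N + 1) * real n)"
      by (intro ennreal_leI) (simp add: add.commute)
    also have "\<dots> = ennreal (\<gamma> ^ N / (N + 1)) * ennreal_of_enat (hit_time U \<omega>)"
      using enat gamma_pos
      by (simp add: ennreal_of_nat_eq_real_of_nat) (subst ennreal_mult[symmetric]; simp)
    finally show ?thesis by (simp add: add_increasing)
  qed
next
  case infinity
  then show ?thesis using gamma_pos by (simp add: ennreal_mult_top)
qed

lemma power_le_integral_disc_hit:
  assumes s: "s \<in> S" and "0 \<le> H"
    and H: "(\<integral>\<^sup>+\<omega>. ennreal_of_enat (hit_time U \<omega>) \<partial>T s) \<le> ennreal H"
  shows "\<gamma> ^ N \<le> (\<integral>\<omega>. disc_hit \<omega> \<partial>T s) + \<gamma> ^ N / (N + 1) * H"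
proof -
  interpret prob_space "T s" by (rule prob_space_T[OF s])
  define c where "c = \<gamma> ^ N / (N + 1)"
  have "0 \<le> c" using gamma_pos by (simp add: c_def)
  have "ennreal (\<gamma> ^ N) = (\<integral>\<^sup>+\<omega>. ennreal (\<gamma> ^ N) \<partial>T s)"
    by (simp add: emeasure_space_1)
  also have "\<dots> \<le> (\<integral>\<^sup>+\<omega>. ennreal (disc_hit \<omega>) + ennreal c * ennreal_of_enat (hit_time U \<omega>) \<partial>T s)"
    unfolding c_def by (intro nn_integral_mono power_le_disc_hit_plus_hit_time)
  also have "\<dots> = (\<integral>\<^sup>+\<omega>. ennreal (disc_hit \<omega>) \<partial>T s) + ennreal c * (\<integral>\<^sup>+\<omega>. ennreal_of_enat (hit_time U \<omega>) \<partial>T s)"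
    by (simp add: nn_integral_add nn_integral_cmult measurable_T[OF s])
  also have "\<dots> \<le> ennreal (\<integral>\<omega>. disc_hit \<omega> \<partial>T s) + ennreal c * ennreal H"
    using disc_hit_bounds H
    by (intro add_mono mult_left_mono) (simp_all add: nn_integral_eq_integral integrable_disc_hit[OF s])
  also have "\<dots> = ennreal ((\<integral>\<omega>. disc_hit \<omega> \<partial>T s) + c * H)"
    using \<open>0 \<le> c\<close> \<open>0 \<le> H\<close> disc_hit_bounds by (simp add: ennreal_mult ennreal_plus integral_nonneg_AE)
  finally show ?thesis
    unfolding c_def[symmetric] using \<open>0 \<le> c\<close> \<open>0 \<le> H\<close> disc_hit_bounds
    by (subst (asm) ennreal_le_iff) (auto intro!: add_nonneg_nonneg integral_nonneg_AE)
qed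

lemma W_le_of_hit_time_bound:
  assumes s: "s \<in> S"
    and H: "(\<integral>\<^sup>+\<omega>. ennreal_of_enat (hit_time U \<omega>) \<partial>T s) \<le> ennreal H"
    and N: "2 * H \<le> real N"
  shows "W s \<le> C - \<gamma> ^ N / 2"
proof -
  interpret prob_space "T s" by (rule prob_space_T[OF s])
  have "(\<integral>\<^sup>+\<omega>. ennreal_of_enat (hit_time U \<omega>) \<partial>T s) \<le> ennreal (max H 0)"
    using H by (rule order_trans) (simp add: ennreal_leI)
  then have "\<gamma> ^ N \<le> (\<integral>\<omega>. disc_hit \<omega> \<partial>T s) + \<gamma> ^ N / (N + 1) * max H 0"
    by (intro power_le_integral_disc_hit[OF s]) auto
  moreover have "\<gamma> ^ N / (N + 1) * max H 0 \<le> \<gamma> ^ N / 2"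
  proof -
    have "(2 * max H 0) * \<gamma> ^ N \<le> (real N + 1) * \<gamma> ^ N"
      using N gamma_pos by (intro mult_right_mono) auto
    then show ?thesis by (simp add: field_simps)
  qed
  moreover have "W s \<le> (\<integral>\<omega>. C - disc_hit \<omega> \<partial>T s)"
    unfolding W_def using disc_hit_le_disc_visits integrable_disc_hit[OF s]
    by (intro integral_mono integrable_C_minus_disc_visits[OF s]) auto
  then have "W s \<le> C - (\<integral>\<omega>. disc_hit \<omega> \<partial>T s)"
    using integrable_disc_hit[OF s] by (simp add: prob_space)
  ultimately show ?thesis by linarith
qed

lemma integral_W_St_1_le_W:
  assumes X_sets: "X \<in> sets (sspace S)" and Abs_sets: "Abs S T X \<in> sets (sspace S)"
    and U_eq: "U = B \<union> Abs S T X" and s: "s \<in> S" "s \<notin> B"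
  shows "(\<integral>\<omega>. W (St 1 \<omega>) \<partial>T s) \<le> W s"
proof (cases "s \<in> U")
  case True
  with U_eq s have "s \<in> Abs S T X" by simp
  then have "AE \<omega> in T s. \<forall>t. St t \<omega> \<in> Abs S T X"
    using AE_St_in_Abs[OF X_sets Abs_sets] by (simp add: AE_all_countable)
  then have "AE \<omega> in T s. \<forall>t. St t \<omega> \<in> U"
    by eventually_elim (simp add: U_eq)
  then show ?thesis
    using integral_W_St_1_eq_0_if_AE_in_U[OF s(1)] W_bounds(1)[OF s(1)] by simp
next
  case False
  then show ?thesis
    using W_drift_outside[OF s(1), of 0] W_bounds(2)[OF s(1)] by simp
qed

lemma streett_supermartingaleI:
  assumes W'_eq: "\<And>s. s \<in> S \<Longrightarrow> W' s = W s"
    and I_S: "I \<subseteq> S" and "measure \<mu> I = 1" and "absorbing T I" and "0 < \<epsilon>"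
    and decrease: "\<And>s. s \<in> (A - B) \<inter> I \<Longrightarrow> (\<integral>\<omega>. W (St 1 \<omega>) \<partial>T s) + \<epsilon> \<le> W s"
    and nonincrease: "\<And>s. s \<in> I - (A \<union> B) \<Longrightarrow> (\<integral>\<omega>. W (St 1 \<omega>) \<partial>T s) \<le> W s"
  shows "streett_supermartingale \<mu> T A B I W'"
proof -
  have next_eq: "(\<integral>\<^sup>+\<omega>. ennreal (W' (St 1 \<omega>)) \<partial>T s) = ennreal (\<integral>\<omega>. W (St 1 \<omega>) \<partial>T s)"
    if s: "s \<in> S" for s
    unfolding nn_integral_W_St_1[OF s, symmetric]
    by (intro nn_integral_cong) (simp add: W'_eq St_in space_T[OF s])
  have "(\<integral>\<^sup>+\<omega>. ennreal (W' (St 1 \<omega>)) \<partial>T s) + ennreal \<epsilon> \<le> ennreal (W' s)"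
    if s_in: "s \<in> (A - B) \<inter> I" for s
  proof -
    have s: "s \<in> S" using s_in I_S by auto
    have "ennreal (\<integral>\<omega>. W (St 1 \<omega>) \<partial>T s) + ennreal \<epsilon> = ennreal ((\<integral>\<omega>. W (St 1 \<omega>) \<partial>T s) + \<epsilon>)"
      using integral_W_St_1_nonneg[OF s] \<open>0 < \<epsilon>\<close> by (simp add: ennreal_plus)
    also have "\<dots> \<le> ennreal (W s)"
      using decrease[OF s_in] by (rule ennreal_leI)
    finally show ?thesis
      unfolding next_eq[OF s] W'_eq[OF s] .
  qed
  moreover have "(\<integral>\<^sup>+\<omega>. ennreal (W' (St 1 \<omega>)) \<partial>T s) \<le> ennreal (W' s)"
    if s_in: "s \<in> I - (A \<union> B)" for s
  proof -
    have s: "s \<in> S" using s_in I_S by auto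
    show ?thesis
      unfolding next_eq[OF s] W'_eq[OF s] using nonincrease[OF s_in] by (rule ennreal_leI)
  qed
  moreover have "0 \<le> W' s" if "s \<in> I" for s
    using that I_S W_bounds(1) W'_eq by auto
  ultimately show ?thesis
    using assms(3,4,5) unfolding streett_supermartingale_def absorbing_def by blast
qed

lemma C_minus_value_fun:
  assumes reward: "\<forall>s\<in>S. \<forall>a\<in>Act. \<forall>s'\<in>S. r s a s' = indicator U s" and s: "s \<in> S"
  shows "C - value_fun T \<gamma> r s = W s"
proof -
  interpret prob_space "T s" by (rule prob_space_T[OF s])
  have "value_fun T \<gamma> r s = (\<integral>\<omega>. disc_visits \<omega> \<partial>T s)"
    unfolding value_fun_def disc_visits_def using reward St_in At_in
    by (intro Bochner_Integration.integral_cong) (auto simp: space_T[OF s])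
  moreover have "integrable (T s) disc_visits"
    using disc_visits_bounds by (intro integrable_T_bounded[OF s, where B = C]) auto
  ultimately show ?thesis
    unfolding W_def by (simp add: prob_space)
qed

end

theorem theorem1:
  fixes S :: "'s::euclidean_space set" and Act :: "'c::euclidean_space set"
    and P :: "'s \<times> 'c \<Rightarrow> 's measure" and \<mu> :: "'s measure"
    and \<pi> :: "'s \<Rightarrow> 'c measure" and T :: "'s \<Rightarrow> ('s \<times> 'c) stream measure"
    and r :: "'s \<Rightarrow> 'c \<Rightarrow> 's \<Rightarrow> real" and \<gamma> :: real
    and I A B :: "'s set" and Hbar :: real
  assumes S_borel: "S \<in> sets borel" and Act_borel: "Act \<in> sets borel"
    and P_kernel: "P \<in> sspace S \<Otimes>\<^sub>M sspace Act \<rightarrow>\<^sub>M prob_algebra (sspace S)"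
    and mu_prob: "\<mu> \<in> space (prob_algebra (sspace S))"
    and pi_kernel: "\<pi> \<in> sspace S \<rightarrow>\<^sub>M prob_algebra (sspace Act)"
    and traj: "is_traj_kernel S Act P \<pi> T"
    and gamma: "0 < \<gamma>" "\<gamma> < 1"
    and r_meas: "(\<lambda>(s, a, s'). r s a s') \<in> borel_measurable (sspace S \<Otimes>\<^sub>M sspace Act \<Otimes>\<^sub>M sspace S)"
    and r_bounded: "\<exists>K. \<forall>s\<in>S. \<forall>a\<in>Act. \<forall>s'\<in>S. \<bar>r s a s'\<bar> \<le> K"
    and I_meas: "I \<in> sets (sspace S)" and A_meas: "A \<in> sets (sspace S)"
    and B_meas: "B \<in> sets (sspace S)"
    and U_meas: "B \<union> Abs S T (S - (A \<union> B)) \<in> sets (sspace S)"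
    and I_absorbing: "absorbing T I" and mu_I: "measure \<mu> I = 1"
    and reach: "\<forall>s\<in>I. Prob T s (\<lambda>\<omega>. hit_time (B \<union> Abs S T (S - (A \<union> B))) \<omega> < \<infinity>) = 1"
    and Hbar_fin: "\<forall>s\<in>(A - B) \<inter> I.
        (\<integral>\<^sup>+\<omega>. ennreal_of_enat (hit_time (B \<union> Abs S T (S - (A \<union> B))) \<omega>) \<partial>T s) \<le> ennreal Hbar"
    and reward: "\<forall>s\<in>S. \<forall>a\<in>Act. \<forall>s'\<in>S. r s a s' = indicator (B \<union> Abs S T (S - (A \<union> B))) s"
  shows "streett_supermartingale \<mu> T A B I (\<lambda>s. 1 / (1 - \<gamma>) - value_fun T \<gamma> r s)"
proof -
  define X where "X = S - (A \<union> B)"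
  define U where "U = B \<union> Abs S T X"
  interpret discounted_target S Act P \<pi> T \<gamma> U
    using P_kernel pi_kernel traj gamma U_meas by unfold_locales (simp_all add: U_def X_def)
  have I_S: "I \<subseteq> S"
    using sets.sets_into_space[OF I_meas] by simp
  have X_sets: "X \<in> sets (sspace S)"
    unfolding X_def using A_meas B_meas sets.top[of "sspace S"] by auto
  have "Abs S T X = U - B"
    using Abs_subset[OF X_sets] by (auto simp: U_def X_def)
  then have Abs_sets: "Abs S T X \<in> sets (sspace S)"
    using sets.Diff[OF U_meas B_meas] by (simp only: U_def X_def)
  obtain N :: nat where N: "2 * Hbar \<le> real N"
    using real_arch_simple by blast
  have value_fun_eq: "1 / (1 - \<gamma>) - value_fun T \<gamma> r s = W s" if "s \<in> S" for s
    using C_minus_value_fun[OF _ that] reward by (simp add: U_def X_def)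
  show ?thesis
  proof (rule streett_supermartingaleI[OF value_fun_eq I_S mu_I I_absorbing])
    show "0 < (1 - \<gamma>) * (\<gamma> ^ N / 2) / \<gamma>"
      using gamma by simp
    show "(\<integral>\<omega>. W (St 1 \<omega>) \<partial>T s) + (1 - \<gamma>) * (\<gamma> ^ N / 2) / \<gamma> \<le> W s" if "s \<in> (A - B) \<inter> I" for s
      using that I_S Hbar_fin Abs_subset[OF X_sets]
      by (intro W_drift_outside W_le_of_hit_time_bound[OF _ _ N]) (auto simp: U_def X_def)
    show "(\<integral>\<omega>. W (St 1 \<omega>) \<partial>T s) \<le> W s" if "s \<in> I - (A \<union> B)" for s
      using that I_S by (intro integral_W_St_1_le_W[OF X_sets Abs_sets U_def]) auto
  qed
qed

end
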